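(* Let $(X,\mathbb{F})$ be a non-autonomous system on a compact metric space and let $\Psi$ be a hyperspace admissible with $\mathbb{F}$ such that $\mathcal{F}(X)\subseteq\Psi$, endowed with any admissible hyperspace topology $\Delta$ (of hit-and-miss or hit-and-far-miss type). If the set of periodic points of $(X,\mathbb{F})$ is dense in $X$, then the set of periodic points of $(\Psi,\overline{\mathbb{F}})$ is dense in $(\Psi,\Delta)$.
   Context: $(X,d)$ is a compact metric space, $\mathbb{F}=(f_n)_{n\in\mathbb{N}}$ a sequence of continuous self-maps of $X$, and $\omega_n=f_n\circ f_{n-1}\circ\cdots\circ f_1$. A point $x$ is periodic for $\mathbb{F}$ if there is $n\in\mathbb{N}$ with $\omega_{nk}(x)=x$ for all $k\in\mathbb{N}$. $\mathcal{K}(X)$ denotes the non-empty compact subsets of $X$, $\mathcal{F}(X)$ the non-empty finite subsets. A hyperspace $\Psi\subseteq\mathcal{K}(X)$ is admissible with $\mathbb{F}$ if $\omega_k(A)\in\Psi$ for all $A\in\Psi$, $k\in\mathbb{N}$; the induced system $(\Psi,\overline{\mathbb{F}})$ is given by $\overline{f_n}(A)=f_n(A)$, so $\overline{\omega}_k(A)=\omega_k(A)$, and dynamical notions for it are defined as for $(X,\mathbb{F})$ with $\overline{\omega}_k$ in place of $\omega_k$ (so $A\in\Psi$ is periodic if $\overline{\omega}_{nk}(A)=A$ for all $k$, for some $n$). A hyperspace topology is admissible if $x\mapsto\{x\}$ is continuous; every admissible topology is of hit-and-miss type (subbasic sets $U^-=\{A: A\cap U\neq\emptyset\}$ for $U$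 open and $(E^c)^+=\{A: A\subseteq E^c\}$ for $E$ in a fixed family $\mathcal{C}$ of closed sets) or hit-and-far-miss type (with $(E^c)^{++}=\{A:\exists\varepsilon>0,\ S_\varepsilon(A)\subseteq E^c\}$ instead), and the induced maps are assumed continuous. *)

theory Defs
  imports "HOL-Analysis.Analysis"
begin

(* omega f n = f n o f (n-1) o ... o f 1; the maps are indexed from 1, f 0 is unused *)
fun omega :: "(nat \<Rightarrow> 'a \<Rightarrow> 'a) \<Rightarrow> nat \<Rightarrow> 'a \<Rightarrow> 'a" where
  "omega f 0 = id"
| "omega f (Suc n) = f (Suc n) \<circ> omega f n"

definition periodic_pt :: "(nat \<Rightarrow> 'a \<Rightarrow> 'a) \<Rightarrow> 'a \<Rightarrow> bool" where
  "periodic_pt f x \<longleftrightarrow> (\<exists>n\<ge>1. \<forall>k\<ge>1. omega f (n * k) x = x)"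

definition periodic_set :: "(nat \<Rightarrow> 'a \<Rightarrow> 'a) \<Rightarrow> 'a set \<Rightarrow> bool" where
  "periodic_set f A \<longleftrightarrow> (\<exists>n\<ge>1. \<forall>k\<ge>1. omega f (n * k) ` A = A)"

definition eps_nbhd :: "'a::metric_space set \<Rightarrow> real \<Rightarrow> 'a set \<Rightarrow> 'a set" where
  "eps_nbhd X e A = {y \<in> X. \<exists>a\<in>A. dist a y < e}"

definition hit_miss_top :: "'a::metric_space set \<Rightarrow> 'a set set \<Rightarrow> 'a set topology" where
  "hit_miss_top X C = topology_generated_by
     ({ {A. A \<inter> U \<noteq> {}} | U. openin (top_of_set X) U }
      \<union> { {A. A \<subseteq> X - E} | E. E \<in> C })"

definition hit_far_miss_top :: "'a::metric_space set \<Rightarrow> 'a set set \<Rightarrow> 'a set topology" where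
  "hit_far_miss_top X C = topology_generated_by
     ({ {A. A \<inter> U \<noteq> {}} | U. openin (top_of_set X) U }
      \<union> { {A. \<exists>e>0. eps_nbhd X e A \<subseteq> X - E} | E. E \<in> C })"

end

theory Submission
  imports Defs
begin

text \<open>Each subbasic open set of a hit-and-miss or hit-and-far-miss topology contains, around each
  of its members \<open>A\<close>, all finite members of some Vietoris box \<open>\<langle>U\<^sub>1, \<dots>, U\<^sub>n; E\<rangle>\<close>
  containing \<open>A\<close> (for a far miss because a finite set has positive distance from a closed set it
  misses), and this property passes to the generated topology. Density of the periodic points
  yields a finite set of periodic points in such a box, one in each \<open>U\<^sub>i - E\<close>, and a finite set
  of periodic points is periodic, the product of the periods being a common period.\<close>

definition vietoris_box :: "'a set \<Rightarrow> 'a set set \<Rightarrow> 'a set \<Rightarrow> 'a set set" where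
  "vietoris_box X H E = {F. F \<subseteq> X - E \<and> (\<forall>U\<in>H. F \<inter> U \<noteq> {})}"

text \<open>\<open>T\<close> is a Vietoris neighbourhood of each of its nonempty members, as seen by finite sets only.\<close>

definition finitely_vietoris_open :: "'a::topological_space set \<Rightarrow> 'a set set \<Rightarrow> bool" where
  "finitely_vietoris_open X T \<longleftrightarrow>
     (\<forall>A\<in>T. A \<subseteq> X \<longrightarrow> A \<noteq> {} \<longrightarrow>
        (\<exists>H E. finite H \<and> (\<forall>U\<in>H. openin (top_of_set X) U) \<and> closedin (top_of_set X) E \<and>
               A \<in> vietoris_box X H E \<and> {F \<in> vietoris_box X H E. finite F} \<subseteq> T))"

lemma vietoris_box_Un:
  "vietoris_box X (H1 \<union> H2) (E1 \<union> E2) = vietoris_box X H1 E1 \<inter> vietoris_box X H2 E2"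
  unfolding vietoris_box_def by blast

lemma finitely_vietoris_openI:
  assumes "\<And>A. A \<in> T \<Longrightarrow> A \<subseteq> X \<Longrightarrow> A \<noteq> {} \<Longrightarrow>
    \<exists>H E. finite H \<and> (\<forall>U\<in>H. openin (top_of_set X) U) \<and> closedin (top_of_set X) E \<and>
          A \<in> vietoris_box X H E \<and> {F \<in> vietoris_box X H E. finite F} \<subseteq> T"
  shows "finitely_vietoris_open X T"
  unfolding finitely_vietoris_open_def by (intro ballI impI assms)

lemma finitely_vietoris_openE:
  assumes "finitely_vietoris_open X T" "A \<in> T" "A \<subseteq> X" "A \<noteq> {}"
  obtains H E where "finite H" "\<forall>U\<in>H. openin (top_of_set X) U" "closedin (top_of_set X) E"
    "A \<in> vietoris_box X H E" "{F \<in> vietoris_box X H E. finite F} \<subseteq> T"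
  using assms unfolding finitely_vietoris_open_def by meson

lemma finitely_vietoris_open_if_box:
  assumes "finite H" "\<forall>U\<in>H. openin (top_of_set X) U" "closedin (top_of_set X) E"
    and "\<And>A. A \<in> T \<Longrightarrow> A \<subseteq> X \<Longrightarrow> A \<in> vietoris_box X H E"
    and "{F \<in> vietoris_box X H E. finite F} \<subseteq> T"
  shows "finitely_vietoris_open X T"
proof (rule finitely_vietoris_openI)
  fix A assume "A \<in> T" "A \<subseteq> X"
  then show "\<exists>H E. finite H \<and> (\<forall>U\<in>H. openin (top_of_set X) U) \<and> closedin (top_of_set X) E \<and>
      A \<in> vietoris_box X H E \<and> {F \<in> vietoris_box X H E. finite F} \<subseteq> T"
    using assms by (intro exI[of _ H] exI[of _ E] conjI) simp_all
qed

lemma finitely_vietoris_open_hit: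
  assumes "openin (top_of_set X) U"
  shows "finitely_vietoris_open X {A. A \<inter> U \<noteq> {}}"
  by (rule finitely_vietoris_open_if_box[of "{U}" _ "{}"]) (auto simp: assms vietoris_box_def)

lemma finitely_vietoris_open_miss:
  assumes "closedin (top_of_set X) E"
  shows "finitely_vietoris_open X {A. A \<subseteq> X - E}"
  by (rule finitely_vietoris_open_if_box[of "{}" _ E]) (auto simp: assms vietoris_box_def)

lemma subset_eps_nbhd:
  assumes "A \<subseteq> X" "e > 0"
  shows "A \<subseteq> eps_nbhd X e A"
proof
  fix y assume "y \<in> A"
  then show "y \<in> eps_nbhd X e A"
    using assms unfolding eps_nbhd_def by (intro CollectI conjI bexI[of _ y]) auto
qed

lemma finite_eps_nbhd_subset_open:
  fixes X :: "'a::metric_space set"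
  assumes "finite F" "F \<subseteq> V" "openin (top_of_set X) V"
  shows "\<exists>e>0. eps_nbhd X e F \<subseteq> V"
proof -
  have "\<exists>d>0. \<forall>y\<in>X. dist y x < d \<longrightarrow> y \<in> V" if "x \<in> F" for x
    using assms(2,3) that by (auto simp: openin_euclidean_subtopology_iff)
  then obtain d where d: "\<And>x. x \<in> F \<Longrightarrow> d x > 0 \<and> (\<forall>y\<in>X. dist y x < d x \<longrightarrow> y \<in> V)"
    by metis
  define e where "e = Min (insert 1 (d ` F))"
  have "e > 0"
    using d assms(1) by (simp add: e_def)
  moreover have "eps_nbhd X e F \<subseteq> V"
  proof
    fix y assume "y \<in> eps_nbhd X e F"
    then obtain x where "x \<in> F" "y \<in> X" "dist x y < e"
      unfolding eps_nbhd_def by blast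
    moreover have "e \<le> d x"
      using assms(1) \<open>x \<in> F\<close> by (simp add: e_def)
    ultimately show "y \<in> V"
      using d[of x] by (simp add: dist_commute)
  qed
  ultimately show ?thesis
    by blast
qed

lemma finitely_vietoris_open_far_miss:
  fixes X :: "'a::metric_space set"
  assumes "closedin (top_of_set X) E"
  shows "finitely_vietoris_open X {A. \<exists>e>0. eps_nbhd X e A \<subseteq> X - E}"
proof (rule finitely_vietoris_open_if_box[of "{}" _ E])
  have "openin (top_of_set X) (X - E)"
    using assms by (simp add: openin_diff)
  then show "{F \<in> vietoris_box X {} E. finite F} \<subseteq> {A. \<exists>e>0. eps_nbhd X e A \<subseteq> X - E}"
    using finite_eps_nbhd_subset_open unfolding vietoris_box_def by blast
  show "A \<in> vietoris_box X {} E" if "A \<in> {A. \<exists>e>0. eps_nbhd X e A \<subseteq> X - E}" "A \<subseteq> X" for A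
    using that subset_eps_nbhd unfolding vietoris_box_def by blast
qed (use assms in simp_all)

lemma finitely_vietoris_open_generate_topology_on:
  assumes "generate_topology_on S T" "\<And>s. s \<in> S \<Longrightarrow> finitely_vietoris_open X s"
  shows "finitely_vietoris_open X T"
  using assms(1)
proof (induction rule: generate_topology_on.induct)
  case Empty
  show ?case by (simp add: finitely_vietoris_open_def)
next
  case (Int a b)
  show ?case
  proof (rule finitely_vietoris_openI)
    fix A assume A: "A \<in> a \<inter> b" "A \<subseteq> X" "A \<noteq> {}"
    obtain H1 E1 where 1: "finite H1" "\<forall>U\<in>H1. openin (top_of_set X) U"
      "closedin (top_of_set X) E1" "A \<in> vietoris_box X H1 E1"
      "{F \<in> vietoris_box X H1 E1. finite F} \<subseteq> a"
      using finitely_vietoris_openE[OF Int.IH(1)] A by blast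
    obtain H2 E2 where 2: "finite H2" "\<forall>U\<in>H2. openin (top_of_set X) U"
      "closedin (top_of_set X) E2" "A \<in> vietoris_box X H2 E2"
      "{F \<in> vietoris_box X H2 E2. finite F} \<subseteq> b"
      using finitely_vietoris_openE[OF Int.IH(2)] A by blast
    show "\<exists>H E. finite H \<and> (\<forall>U\<in>H. openin (top_of_set X) U) \<and> closedin (top_of_set X) E \<and>
        A \<in> vietoris_box X H E \<and> {F \<in> vietoris_box X H E. finite F} \<subseteq> a \<inter> b"
      using 1 2 by (intro exI[of _ "H1 \<union> H2"] exI[of _ "E1 \<union> E2"])
        (auto simp: vietoris_box_Un closedin_Un)
  qed
next
  case (UN K)
  show ?case
  proof (rule finitely_vietoris_openI)
    fix A assume "A \<in> \<Union>K" "A \<subseteq> X" "A \<noteq> {}"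
    then obtain k where "k \<in> K" "A \<in> k" "finitely_vietoris_open X k"
      using UN.IH by blast
    then show "\<exists>H E. finite H \<and> (\<forall>U\<in>H. openin (top_of_set X) U) \<and> closedin (top_of_set X) E \<and>
        A \<in> vietoris_box X H E \<and> {F \<in> vietoris_box X H E. finite F} \<subseteq> \<Union>K"
      using \<open>A \<subseteq> X\<close> \<open>A \<noteq> {}\<close> by (elim finitely_vietoris_openE) blast+
  qed
next
  case (Basis s)
  then show ?case using assms(2) by blast
qed

lemma finitely_vietoris_open_topology_generated_by:
  assumes "openin (topology_generated_by S) T" "\<And>s. s \<in> S \<Longrightarrow> finitely_vietoris_open X s"
  shows "finitely_vietoris_open X T"
  using assms finitely_vietoris_open_generate_topology_on openin_topology_generated_by by blast

lemma finitely_vietoris_open_hit_miss_top: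
  assumes "openin (hit_miss_top X C) T" "\<And>E. E \<in> C \<Longrightarrow> closedin (top_of_set X) E"
  shows "finitely_vietoris_open X T"
  using assms(1) unfolding hit_miss_top_def
  by (rule finitely_vietoris_open_topology_generated_by)
    (use assms(2) finitely_vietoris_open_hit finitely_vietoris_open_miss in blast)

lemma finitely_vietoris_open_hit_far_miss_top:
  fixes X :: "'a::metric_space set"
  assumes "openin (hit_far_miss_top X C) T" "\<And>E. E \<in> C \<Longrightarrow> closedin (top_of_set X) E"
  shows "finitely_vietoris_open X T"
  using assms(1) unfolding hit_far_miss_top_def
  by (rule finitely_vietoris_open_topology_generated_by)
    (use assms(2) finitely_vietoris_open_hit finitely_vietoris_open_far_miss in blast)

lemma in_topspace_topology_generated_by_hit:
  assumes "{B. B \<inter> U \<noteq> {}} \<in> S" "A \<inter> U \<noteq> {}"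
  shows "A \<in> topspace (topology_generated_by S)"
  unfolding topology_generated_by_topspace using assms(2) by (intro UnionI[OF assms(1)]) simp

lemma topspace_hit_miss_top:
  assumes "A \<subseteq> X" "A \<noteq> {}"
  shows "A \<in> topspace (hit_miss_top X C)"
  unfolding hit_miss_top_def
  by (rule in_topspace_topology_generated_by_hit[of X]) (use assms in \<open>auto intro!: exI[of _ X]\<close>)

lemma topspace_hit_far_miss_top:
  assumes "A \<subseteq> X" "A \<noteq> {}"
  shows "A \<in> topspace (hit_far_miss_top X C)"
  unfolding hit_far_miss_top_def
  by (rule in_topspace_topology_generated_by_hit[of X]) (use assms in \<open>auto intro!: exI[of _ X]\<close>)

lemma openin_Int_dense_nonempty:
  assumes "X \<subseteq> closure P" "P \<subseteq> X" "openin (top_of_set X) V" "V \<noteq> {}"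
  shows "V \<inter> P \<noteq> {}"
proof -
  obtain G where G: "open G" "V = X \<inter> G"
    using assms(3) by (auto simp: openin_open)
  obtain v where "v \<in> V"
    using assms(4) by blast
  then have "G \<inter> closure P \<noteq> {}"
    using assms(1) G(2) by blast
  then have "G \<inter> P \<noteq> {}"
    by (simp add: open_Int_closure_eq_empty[OF G(1)])
  then show ?thesis
    using G(2) assms(2) by blast
qed

lemma vietoris_box_finite_dense:
  assumes "X \<subseteq> closure P" "P \<subseteq> X" "finite H" "\<forall>U\<in>H. openin (top_of_set X) U"
    "closedin (top_of_set X) E" "A \<in> vietoris_box X H E" "A \<noteq> {}"
  obtains F where "finite F" "F \<noteq> {}" "F \<subseteq> P" "F \<in> vietoris_box X H E"
proof -
  have A: "A \<subseteq> X - E" "\<forall>U\<in>H. A \<inter> U \<noteq> {}"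
    using assms(6) by (simp_all add: vietoris_box_def)
  \<comment> \<open>\<open>X\<close> is added to \<open>H\<close> only to make \<open>F\<close> nonempty.\<close>
  have "\<exists>x. x \<in> (U - E) \<inter> P" if U: "U \<in> insert X H" for U
  proof -
    have "openin (top_of_set X) U"
      using U assms(4) by auto
    then have "openin (top_of_set X) (U - E)"
      using assms(5) by (rule openin_diff)
    moreover have "A \<inter> U \<noteq> {}"
      using U A assms(7) by auto
    then have "U - E \<noteq> {}"
      using A(1) by blast
    ultimately show ?thesis
      using openin_Int_dense_nonempty[OF assms(1,2)] by blast
  qed
  then obtain g where g: "\<And>U. U \<in> insert X H \<Longrightarrow> g U \<in> (U - E) \<inter> P"
    by metis
  have "g U \<in> X - E" if "U \<in> insert X H" for U
    using g[OF that] that assms(4) openin_subset by fastforce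
  then have "g ` insert X H \<subseteq> X - E"
    by (rule image_subsetI)
  moreover have "g ` insert X H \<inter> U \<noteq> {}" if "U \<in> H" for U
    using g[of U] that by blast
  ultimately have "g ` insert X H \<in> vietoris_box X H E"
    unfolding vietoris_box_def by blast
  moreover have "g ` insert X H \<subseteq> P"
    using g by (intro image_subsetI) blast
  ultimately show ?thesis
    using assms(3) by (intro that) auto
qed

lemma hyperspace_closure_finite_dense:
  assumes open_fvo: "\<And>T. openin \<Delta> T \<Longrightarrow> finitely_vietoris_open X T"
    and topspace: "\<And>A. A \<subseteq> X \<Longrightarrow> A \<noteq> {} \<Longrightarrow> A \<in> topspace \<Delta>"
    and hyper: "\<Psi> \<subseteq> {A. A \<subseteq> X \<and> A \<noteq> {}}"
    and finite_in: "{A. A \<subseteq> X \<and> A \<noteq> {} \<and> finite A} \<subseteq> \<Psi>"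
    and dense: "X \<subseteq> closure P" "P \<subseteq> X"
  shows "\<Psi> \<subseteq> subtopology \<Delta> \<Psi> closure_of {F \<in> \<Psi>. finite F \<and> F \<subseteq> P}"
proof
  fix A assume "A \<in> \<Psi>"
  then have A: "A \<subseteq> X" "A \<noteq> {}" using hyper by auto
  show "A \<in> subtopology \<Delta> \<Psi> closure_of {F \<in> \<Psi>. finite F \<and> F \<subseteq> P}"
    unfolding in_closure_of
  proof (intro conjI allI impI)
    show "A \<in> topspace (subtopology \<Delta> \<Psi>)"
      using \<open>A \<in> \<Psi>\<close> A topspace by simp
    fix T assume "A \<in> T \<and> openin (subtopology \<Delta> \<Psi>) T"
    then obtain T' where T': "openin \<Delta> T'" "T = T' \<inter> \<Psi>" "A \<in> T'"
      by (auto simp: openin_subtopology)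
    obtain H E where HE: "finite H" "\<forall>U\<in>H. openin (top_of_set X) U"
      "closedin (top_of_set X) E" "A \<in> vietoris_box X H E"
      and box: "{F \<in> vietoris_box X H E. finite F} \<subseteq> T'"
      using finitely_vietoris_openE[OF open_fvo[OF T'(1)] T'(3) A] .
    obtain F where F: "finite F" "F \<noteq> {}" "F \<subseteq> P" "F \<in> vietoris_box X H E"
      using vietoris_box_finite_dense[OF dense HE A(2)] .
    then have "F \<in> \<Psi>"
      using finite_in dense(2) by auto
    then show "\<exists>F. F \<in> {F \<in> \<Psi>. finite F \<and> F \<subseteq> P} \<and> F \<in> T"
      using F box T'(2) by blast
  qed
qed

lemma periodic_set_finite:
  assumes "finite F" "\<And>x. x \<in> F \<Longrightarrow> periodic_pt f x"
  shows "periodic_set f F"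
proof -
  obtain p where p: "\<And>x. x \<in> F \<Longrightarrow> p x \<ge> 1 \<and> (\<forall>k\<ge>1. omega f (p x * k) x = x)"
    using assms(2) unfolding periodic_pt_def by metis
  define N where "N = (\<Prod>x\<in>F. p x)"
  have N: "N \<ge> 1"
    unfolding N_def using p by (metis One_nat_def Suc_le_eq prod_pos)
  have "omega f (N * k) x = x" if "k \<ge> 1" "x \<in> F" for k x
  proof -
    have "p x dvd N"
      unfolding N_def using assms(1) \<open>x \<in> F\<close> by (rule dvd_prodI)
    then obtain m where m: "N = p x * m" ..
    then have "m * k \<ge> 1"
      using N \<open>k \<ge> 1\<close> by (cases m) auto
    then show ?thesis
      using p \<open>x \<in> F\<close> m by (simp add: mult.assoc)
  qed
  then have "\<forall>k\<ge>1. omega f (N * k) ` F = F"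
    by (auto simp: image_iff)
  then show ?thesis
    unfolding periodic_set_def using N by blast
qed

theorem mainTheorem1:
  fixes X :: "'a::metric_space set"
    and f :: "nat \<Rightarrow> 'a \<Rightarrow> 'a"
    and \<Psi> :: "'a set set"
    and C :: "'a set set"
    and \<Delta> :: "'a set topology"
  assumes X_compact: "compact X"
    and f_cont: "\<And>n. n \<ge> 1 \<Longrightarrow> continuous_on X (f n)"
    and f_self: "\<And>n. n \<ge> 1 \<Longrightarrow> f n ` X \<subseteq> X"
    and Psi_hyper: "\<Psi> \<subseteq> {A. A \<subseteq> X \<and> A \<noteq> {} \<and> compact A}"
    and Psi_fin: "{A. A \<subseteq> X \<and> A \<noteq> {} \<and> finite A} \<subseteq> \<Psi>"
    and Psi_adm: "\<And>A k. A \<in> \<Psi> \<Longrightarrow> k \<ge> 1 \<Longrightarrow> omega f k ` A \<in> \<Psi>"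
    and C_closed: "\<And>E. E \<in> C \<Longrightarrow> closedin (top_of_set X) E"
    and Delta_type: "\<Delta> = hit_miss_top X C \<or> \<Delta> = hit_far_miss_top X C"
    and Delta_adm: "continuous_map (top_of_set X) (subtopology \<Delta> \<Psi>) (\<lambda>x. {x})"
    and dense: "X \<subseteq> closure {x \<in> X. periodic_pt f x}"
  shows "\<Psi> \<subseteq> (subtopology \<Delta> \<Psi>) closure_of {A \<in> \<Psi>. periodic_set f A}"
proof -
  let ?P = "{x \<in> X. periodic_pt f x}"
  have "finitely_vietoris_open X T" if "openin \<Delta> T" for T
    using Delta_type that C_closed
    by (elim disjE) (simp_all add: finitely_vietoris_open_hit_miss_top
        finitely_vietoris_open_hit_far_miss_top)
  moreover have "A \<in> topspace \<Delta>" if "A \<subseteq> X" "A \<noteq> {}" for A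
    using Delta_type that by (elim disjE) (simp_all add: topspace_hit_miss_top topspace_hit_far_miss_top)
  ultimately have "\<Psi> \<subseteq> subtopology \<Delta> \<Psi> closure_of {F \<in> \<Psi>. finite F \<and> F \<subseteq> ?P}"
    using Psi_hyper Psi_fin dense by (intro hyperspace_closure_finite_dense) auto
  also have "\<dots> \<subseteq> subtopology \<Delta> \<Psi> closure_of {A \<in> \<Psi>. periodic_set f A}"
    by (rule closure_of_mono) (auto intro: periodic_set_finite)
  finally show ?thesis .
qed

end
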